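(* Let $(G,\mathcal{B}_1,\mathcal{B}_2)$ be a Rota-Baxter system of groups whose cocycle $\Phi(a)=\mathcal{B}_1(a)\mathcal{B}_2(a)$ is bijective. Then $\widetilde{\mathcal{B}}:G\to G$, $\widetilde{\mathcal{B}}(a)=\mathcal{B}_1(\Phi^{-1}(a))$, is a Rota-Baxter operator of weight $-1$, and $\mathcal{B}:G\to G$, $\mathcal{B}(a)=\mathcal{B}_2(\Phi^{-1}(a))^{-1}$, is a Rota-Baxter operator of weight $1$.
   Context: A Rota-Baxter system of groups is a triple $(G,\mathcal{B}_1,\mathcal{B}_2)$ where $G$ is a group and $\mathcal{B}_1,\mathcal{B}_2:G\to G$ are maps such that for all $a,b\in G$: $\mathcal{B}_1(a)\mathcal{B}_1(b)=\mathcal{B}_1(\mathcal{B}_1(a)b\mathcal{B}_2(a))$ and $\mathcal{B}_2(b)\mathcal{B}_2(a)=\mathcal{B}_2(\mathcal{B}_1(a)b\mathcal{B}_2(a))$. A map $\mathcal{B}:G\to G$ is a Rota-Baxter operator of weight $1$ if $\mathcal{B}(a)\mathcal{B}(b)=\mathcal{B}(a\mathcal{B}(a)b\mathcal{B}(a)^{-1})$ for all $a,b\in G$; a map $\mathcal{C}:G\to G$ is a Rota-Baxter operator of weight $-1$ if $\mathcal{C}(a)\mathcal{C}(b)=\mathcal{C}(\mathcal{C}(a)b\mathcal{C}(a)^{-1}a)$ for all $a,b\in G$. *)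

theory Defs
  imports "HOL-Algebra.Group"
begin

definition rb_system :: "('a, 'b) monoid_scheme \<Rightarrow> ('a \<Rightarrow> 'a) \<Rightarrow> ('a \<Rightarrow> 'a) \<Rightarrow> bool" where
  "rb_system G B1 B2 \<longleftrightarrow> group G \<and> B1 \<in> carrier G \<rightarrow> carrier G \<and> B2 \<in> carrier G \<rightarrow> carrier G \<and>
     (\<forall>a\<in>carrier G. \<forall>b\<in>carrier G.
        B1 a \<otimes>\<^bsub>G\<^esub> B1 b = B1 (B1 a \<otimes>\<^bsub>G\<^esub> b \<otimes>\<^bsub>G\<^esub> B2 a) \<and>
        B2 b \<otimes>\<^bsub>G\<^esub> B2 a = B2 (B1 a \<otimes>\<^bsub>G\<^esub> b \<otimes>\<^bsub>G\<^esub> B2 a))"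

definition rb_operator_weight_1 :: "('a, 'b) monoid_scheme \<Rightarrow> ('a \<Rightarrow> 'a) \<Rightarrow> bool" where
  "rb_operator_weight_1 G B \<longleftrightarrow> B \<in> carrier G \<rightarrow> carrier G \<and>
     (\<forall>a\<in>carrier G. \<forall>b\<in>carrier G.
        B a \<otimes>\<^bsub>G\<^esub> B b = B (a \<otimes>\<^bsub>G\<^esub> B a \<otimes>\<^bsub>G\<^esub> b \<otimes>\<^bsub>G\<^esub> inv\<^bsub>G\<^esub> (B a)))"

definition rb_operator_weight_neg1 :: "('a, 'b) monoid_scheme \<Rightarrow> ('a \<Rightarrow> 'a) \<Rightarrow> bool" where
  "rb_operator_weight_neg1 G C \<longleftrightarrow> C \<in> carrier G \<rightarrow> carrier G \<and>
     (\<forall>a\<in>carrier G. \<forall>b\<in>carrier G.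
        C a \<otimes>\<^bsub>G\<^esub> C b = C (C a \<otimes>\<^bsub>G\<^esub> b \<otimes>\<^bsub>G\<^esub> inv\<^bsub>G\<^esub> (C a) \<otimes>\<^bsub>G\<^esub> a))"

end

theory Submission
  imports Defs
begin

text \<open>Writing \<open>\<Phi>(a) = B\<^sub>1(a) B\<^sub>2(a)\<close>, the two Rota-Baxter system identities combine into
  \<open>\<Phi>(B\<^sub>1(x) y B\<^sub>2(x)) = B\<^sub>1(x) \<Phi>(y) B\<^sub>2(x)\<close>, so \<open>\<Phi>\<^sup>-\<^sup>1\<close> commutes with the twisted conjugation
  \<open>b \<mapsto> B\<^sub>1(x) b B\<^sub>2(x)\<close>. For \<open>x = \<Phi>\<^sup>-\<^sup>1(a)\<close> this twisted conjugation can be written both as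
  \<open>b \<mapsto> B\<^sub>1(x) b B\<^sub>1(x)\<^sup>-\<^sup>1 a\<close> and as \<open>b \<mapsto> a B\<^sub>2(x)\<^sup>-\<^sup>1 b B\<^sub>2(x)\<close>, which turns the system identities
  for \<open>B\<^sub>1\<close> and \<open>B\<^sub>2\<close> into the Rota-Baxter identities of weight \<open>-1\<close> and \<open>1\<close>.\<close>

definition rb_cocycle :: "('a, 'b) monoid_scheme \<Rightarrow> ('a \<Rightarrow> 'a) \<Rightarrow> ('a \<Rightarrow> 'a) \<Rightarrow> 'a \<Rightarrow> 'a" where
  "rb_cocycle G B1 B2 a = B1 a \<otimes>\<^bsub>G\<^esub> B2 a"

lemma rb_systemD:
  assumes "rb_system G B1 B2"
  shows rb_system_group: "group G"
    and rb_system_closed1: "a \<in> carrier G \<Longrightarrow> B1 a \<in> carrier G"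
    and rb_system_closed2: "a \<in> carrier G \<Longrightarrow> B2 a \<in> carrier G"
    and rb_system_eq1: "\<lbrakk>a \<in> carrier G; b \<in> carrier G\<rbrakk> \<Longrightarrow>
          B1 a \<otimes>\<^bsub>G\<^esub> B1 b = B1 (B1 a \<otimes>\<^bsub>G\<^esub> b \<otimes>\<^bsub>G\<^esub> B2 a)"
    and rb_system_eq2: "\<lbrakk>a \<in> carrier G; b \<in> carrier G\<rbrakk> \<Longrightarrow>
          B2 b \<otimes>\<^bsub>G\<^esub> B2 a = B2 (B1 a \<otimes>\<^bsub>G\<^esub> b \<otimes>\<^bsub>G\<^esub> B2 a)"
  using assms unfolding rb_system_def by auto

context group
begin

lemma rb_cocycle_twist:
  assumes rb: "rb_system G B1 B2" and x: "x \<in> carrier G" and y: "y \<in> carrier G"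
  shows "rb_cocycle G B1 B2 (B1 x \<otimes> y \<otimes> B2 x) = B1 x \<otimes> rb_cocycle G B1 B2 y \<otimes> B2 x"
proof -
  note closed = rb_system_closed1[OF rb] rb_system_closed2[OF rb]
  have "rb_cocycle G B1 B2 (B1 x \<otimes> y \<otimes> B2 x) = B1 x \<otimes> B1 y \<otimes> (B2 y \<otimes> B2 x)"
    by (simp add: rb_cocycle_def rb_system_eq1[OF rb x y] rb_system_eq2[OF rb x y])
  also have "\<dots> = B1 x \<otimes> rb_cocycle G B1 B2 y \<otimes> B2 x"
    using x y closed by (simp add: rb_cocycle_def m_assoc)
  finally show ?thesis .
qed

lemma rb_cocycle_inv_twist:
  assumes rb: "rb_system G B1 B2"
    and bij: "bij_betw (rb_cocycle G B1 B2) (carrier G) (carrier G)"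
    and x: "x \<in> carrier G" and b: "b \<in> carrier G"
  defines "\<Psi> \<equiv> inv_into (carrier G) (rb_cocycle G B1 B2)"
  shows "\<Psi> (B1 x \<otimes> b \<otimes> B2 x) = B1 x \<otimes> \<Psi> b \<otimes> B2 x"
proof -
  have y: "\<Psi> b \<in> carrier G"
    using bij b unfolding \<Psi>_def by (metis bij_betw_def inv_into_into)
  have z: "B1 x \<otimes> \<Psi> b \<otimes> B2 x \<in> carrier G"
    using x y by (simp add: rb_system_closed1[OF rb] rb_system_closed2[OF rb])
  have "rb_cocycle G B1 B2 (B1 x \<otimes> \<Psi> b \<otimes> B2 x) = B1 x \<otimes> b \<otimes> B2 x"
    using rb_cocycle_twist[OF rb x y] bij b
    unfolding \<Psi>_def by (simp add: bij_betw_inv_into_right)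
  with z bij show ?thesis
    unfolding \<Psi>_def by (metis bij_betw_inv_into_left)
qed

lemma rb_cocycle_inv_decomp:
  assumes bij: "bij_betw (rb_cocycle G B1 B2) (carrier G) (carrier G)"
    and a: "a \<in> carrier G"
  defines "x \<equiv> inv_into (carrier G) (rb_cocycle G B1 B2) a"
  shows "x \<in> carrier G" and "B1 x \<otimes> B2 x = a"
proof -
  have "a \<in> rb_cocycle G B1 B2 ` carrier G"
    using bij a by (simp add: bij_betw_def)
  then show "x \<in> carrier G" and "B1 x \<otimes> B2 x = a"
    unfolding x_def by (auto simp: inv_into_into f_inv_into_f[of a] rb_cocycle_def[symmetric])
qed

lemma rb_cocycle_inv_B1_weight_neg1:
  assumes rb: "rb_system G B1 B2"
    and bij: "bij_betw (rb_cocycle G B1 B2) (carrier G) (carrier G)"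
  shows "rb_operator_weight_neg1 G (\<lambda>a. B1 (inv_into (carrier G) (rb_cocycle G B1 B2) a))"
  unfolding rb_operator_weight_neg1_def
proof (intro conjI ballI)
  let ?\<Psi> = "inv_into (carrier G) (rb_cocycle G B1 B2)"
  note closed = rb_system_closed1[OF rb] rb_system_closed2[OF rb]
  note decomp = rb_cocycle_inv_decomp[OF bij]
  show "(\<lambda>a. B1 (?\<Psi> a)) \<in> carrier G \<rightarrow> carrier G"
    using decomp(1) closed by blast
  fix a b assume a: "a \<in> carrier G" and b: "b \<in> carrier G"
  define x where "x = ?\<Psi> a"
  have x: "x \<in> carrier G" and y: "?\<Psi> b \<in> carrier G"
    using decomp(1) a b unfolding x_def by auto
  have "B1 x \<otimes> b \<otimes> inv B1 x \<otimes> a = B1 x \<otimes> b \<otimes> (inv B1 x \<otimes> B1 x) \<otimes> B2 x"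
    using decomp(2)[OF a, folded x_def, symmetric] x b closed
    by (simp add: m_assoc del: l_inv Units_l_inv)
  also have "\<dots> = B1 x \<otimes> b \<otimes> B2 x"
    using x b closed by simp
  finally have "?\<Psi> (B1 x \<otimes> b \<otimes> inv B1 x \<otimes> a) = B1 x \<otimes> ?\<Psi> b \<otimes> B2 x"
    using rb_cocycle_inv_twist[OF rb bij x b] by simp
  then show "B1 (?\<Psi> a) \<otimes> B1 (?\<Psi> b) = B1 (?\<Psi> (B1 (?\<Psi> a) \<otimes> b \<otimes> inv B1 (?\<Psi> a) \<otimes> a))"
    using rb_system_eq1[OF rb x y] unfolding x_def by simp
qed

lemma rb_cocycle_inv_B2_weight_1:
  assumes rb: "rb_system G B1 B2"
    and bij: "bij_betw (rb_cocycle G B1 B2) (carrier G) (carrier G)"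
  shows "rb_operator_weight_1 G (\<lambda>a. inv (B2 (inv_into (carrier G) (rb_cocycle G B1 B2) a)))"
  unfolding rb_operator_weight_1_def
proof (intro conjI ballI)
  let ?\<Psi> = "inv_into (carrier G) (rb_cocycle G B1 B2)"
  note closed = rb_system_closed1[OF rb] rb_system_closed2[OF rb]
  note decomp = rb_cocycle_inv_decomp[OF bij]
  show "(\<lambda>a. inv (B2 (?\<Psi> a))) \<in> carrier G \<rightarrow> carrier G"
    using decomp(1) closed by blast
  fix a b assume a: "a \<in> carrier G" and b: "b \<in> carrier G"
  define x where "x = ?\<Psi> a"
  have x: "x \<in> carrier G" and y: "?\<Psi> b \<in> carrier G"
    using decomp(1) a b unfolding x_def by auto
  have "a \<otimes> inv (B2 x) \<otimes> b \<otimes> inv (inv (B2 x)) = B1 x \<otimes> (B2 x \<otimes> inv (B2 x)) \<otimes> b \<otimes> B2 x"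
    using decomp(2)[OF a, folded x_def, symmetric] x b closed
    by (simp add: m_assoc del: r_inv Units_r_inv)
  also have "\<dots> = B1 x \<otimes> b \<otimes> B2 x"
    using x b closed by simp
  finally have "?\<Psi> (a \<otimes> inv (B2 x) \<otimes> b \<otimes> inv (inv (B2 x))) = B1 x \<otimes> ?\<Psi> b \<otimes> B2 x"
    using rb_cocycle_inv_twist[OF rb bij x b] by simp
  then show "inv (B2 (?\<Psi> a)) \<otimes> inv (B2 (?\<Psi> b))
      = inv (B2 (?\<Psi> (a \<otimes> inv (B2 (?\<Psi> a)) \<otimes> b \<otimes> inv (inv (B2 (?\<Psi> a))))))"
    using rb_system_eq2[OF rb x y, symmetric] x y closed unfolding x_def[symmetric] by (simp add: inv_mult_group)
qed

end

theorem proposition3p11: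
  fixes G :: "('a, 'b) monoid_scheme" and B1 B2 :: "'a \<Rightarrow> 'a"
  assumes "rb_system G B1 B2"
    and "bij_betw (\<lambda>a. B1 a \<otimes>\<^bsub>G\<^esub> B2 a) (carrier G) (carrier G)"
  shows "rb_operator_weight_neg1 G (\<lambda>a. B1 (inv_into (carrier G) (\<lambda>x. B1 x \<otimes>\<^bsub>G\<^esub> B2 x) a))
       \<and> rb_operator_weight_1 G (\<lambda>a. inv\<^bsub>G\<^esub> (B2 (inv_into (carrier G) (\<lambda>x. B1 x \<otimes>\<^bsub>G\<^esub> B2 x) a)))"
proof -
  have cocycle: "rb_cocycle G B1 B2 = (\<lambda>a. B1 a \<otimes>\<^bsub>G\<^esub> B2 a)"
    by (simp add: fun_eq_iff rb_cocycle_def)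
  interpret group G
    using assms(1) by (rule rb_system_group)
  show ?thesis
    using rb_cocycle_inv_B1_weight_neg1[OF assms(1)] rb_cocycle_inv_B2_weight_1[OF assms(1)] assms(2)
    unfolding cocycle by blast
qed

end
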